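(* A commutative semigroup $S$ has a non-universal monoid congruence if and only if $S$ has a subset $A$ with $\emptyset\neq A\neq S$ such that $\mathrm{Sep}\,A\neq\emptyset$.
   Context: For a semigroup $S$ and $A\subseteq S$, $\mathrm{Sep}\,A$ (the separator of $A$) is the set of all $x\in S$ with $xA\subseteq A$, $Ax\subseteq A$, $x(S\setminus A)\subseteq S\setminus A$ and $(S\setminus A)x\subseteq S\setminus A$. A congruence $p$ on $S$ is a monoid congruence if the factor semigroup $S/p$ has an identity element; it is universal if $p=S\times S$. *)

theory Defs
  imports Main
begin

text \<open>The semigroup S is the universe of a type of class semigroup_mult
  (commutative: ab_semigroup_mult). Subsets of S are sets of that type.\<close>

definition Sep :: "'a::semigroup_mult set \<Rightarrow> 'a set" where
  "Sep A = {x. (\<forall>a\<in>A. x * a \<in> A) \<and> (\<forall>a\<in>A. a * x \<in> A)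
             \<and> (\<forall>b\<in>-A. x * b \<in> -A) \<and> (\<forall>b\<in>-A. b * x \<in> -A)}"

definition semigroup_congruence :: "('a::semigroup_mult \<times> 'a) set \<Rightarrow> bool" where
  "semigroup_congruence p \<longleftrightarrow> equiv UNIV p \<and>
     (\<forall>a b c. (a, b) \<in> p \<longrightarrow> (c * a, c * b) \<in> p \<and> (a * c, b * c) \<in> p)"

definition monoid_congruence :: "('a::semigroup_mult \<times> 'a) set \<Rightarrow> bool" where
  "monoid_congruence p \<longleftrightarrow> semigroup_congruence p \<and>
     (\<exists>e. \<forall>x. (e * x, x) \<in> p \<and> (x * e, x) \<in> p)"

end

theory Submission
  imports Defs
begin

text \<open>If \<open>p\<close> is a monoid congruence with identity class \<open>[e]\<close>, then \<open>e\<close> separates \<open>[e]\<close>: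
  \<open>e x\<close> lies in the class of \<open>x\<close>, so it lies in \<open>[e]\<close> exactly when \<open>x\<close> does.
  Conversely, if \<open>e \<in> Sep A\<close> for a proper nonempty subset \<open>A\<close> of a commutative
  semigroup, the syntactic congruence of \<open>A\<close> identifies \<open>e x\<close> with \<open>x\<close>, so \<open>[e]\<close> is an
  identity of the quotient, and it does not identify an element of \<open>A\<close> with one outside.\<close>

lemma equiv_Image_eq_UNIV_imp_eq_UNIV:
  assumes "equiv UNIV p" and "p `` {a} = UNIV"
  shows "p = UNIV"
proof -
  have "(a, x) \<in> p" for x
    using assms(2) by blast
  then have "(x, y) \<in> p" for x y
    using assms(1) unfolding equiv_def by (metis symD transD)
  then show ?thesis by auto
qed

lemma identity_in_Sep_identity_class:
  fixes p :: "('a::semigroup_mult \<times> 'a) set"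
  assumes "semigroup_congruence p" and "\<And>x. (e * x, x) \<in> p \<and> (x * e, x) \<in> p"
  shows "e \<in> Sep (p `` {e})"
proof -
  have equiv: "equiv UNIV p"
    using assms(1) unfolding semigroup_congruence_def by blast
  have sym: "sym p" and trans: "trans p"
    using equiv unfolding equiv_def by blast+
  have "(e, e * y) \<in> p \<longleftrightarrow> (e, y) \<in> p" "(e, y * e) \<in> p \<longleftrightarrow> (e, y) \<in> p" for y
    using assms(2)[of y] symD [OF sym] transD [OF trans] by blast+
  then show ?thesis unfolding Sep_def by auto
qed

lemma nonuniversal_monoid_congruence_imp_ex_Sep:
  fixes p :: "('a::semigroup_mult \<times> 'a) set"
  assumes "monoid_congruence p" and "p \<noteq> UNIV"
  shows "\<exists>A :: 'a set. A \<noteq> {} \<and> A \<noteq> UNIV \<and> Sep A \<noteq> {}"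
proof -
  obtain e where congr: "semigroup_congruence p"
    and e: "\<And>x. (e * x, x) \<in> p \<and> (x * e, x) \<in> p"
    using assms(1) unfolding monoid_congruence_def by blast
  have equiv: "equiv UNIV p"
    using congr unfolding semigroup_congruence_def by blast
  have "e \<in> p `` {e}"
    using equiv_class_self [OF equiv UNIV_I] .
  moreover have "p `` {e} \<noteq> UNIV"
    using equiv_Image_eq_UNIV_imp_eq_UNIV [OF equiv] assms(2) by auto
  moreover have "e \<in> Sep (p `` {e})"
    using identity_in_Sep_identity_class [OF congr e] .
  ultimately show ?thesis by (intro exI [of _ "p `` {e}"]) auto
qed

definition syntactic_congruence :: "'a::semigroup_mult set \<Rightarrow> ('a \<times> 'a) set" where
  "syntactic_congruence A = {(a, b). (a \<in> A \<longleftrightarrow> b \<in> A) \<and> (\<forall>s. s * a \<in> A \<longleftrightarrow> s * b \<in> A)}"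

lemma semigroup_congruence_syntactic_congruence:
  fixes A :: "'a::ab_semigroup_mult set"
  shows "semigroup_congruence (syntactic_congruence A)"
proof -
  have "equiv UNIV (syntactic_congruence A)"
    unfolding syntactic_congruence_def equiv_def refl_on_def sym_def trans_def by auto
  moreover have "(c * a, c * b) \<in> syntactic_congruence A"
    if "(a, b) \<in> syntactic_congruence A" for a b c
    using that unfolding syntactic_congruence_def by (auto simp: mult.assoc [symmetric])
  ultimately show ?thesis
    unfolding semigroup_congruence_def by (simp add: mult.commute)
qed

lemma syntactic_congruence_identity:
  fixes A :: "'a::ab_semigroup_mult set"
  assumes "e \<in> Sep A"
  shows "(e * x, x) \<in> syntactic_congruence A"
proof -
  have e: "e * y \<in> A \<longleftrightarrow> y \<in> A" for y
    using assms unfolding Sep_def by auto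
  have "s * (e * x) \<in> A \<longleftrightarrow> s * x \<in> A" for s
    using e [of "s * x"] by (simp add: mult.left_commute)
  then show ?thesis
    unfolding syntactic_congruence_def using e [of x] by simp
qed

lemma syntactic_congruence_neq_UNIV:
  assumes "A \<noteq> {}" and "A \<noteq> UNIV"
  shows "syntactic_congruence A \<noteq> UNIV"
proof -
  obtain a b where "a \<in> A" "b \<notin> A"
    using assms by auto
  then have "(a, b) \<notin> syntactic_congruence A"
    unfolding syntactic_congruence_def by auto
  then show ?thesis by auto
qed

lemma monoid_congruence_syntactic_congruence:
  fixes A :: "'a::ab_semigroup_mult set"
  assumes "Sep A \<noteq> {}"
  shows "monoid_congruence (syntactic_congruence A)"
proof -
  obtain e where "e \<in> Sep A"
    using assms by auto
  then have "(e * x, x) \<in> syntactic_congruence A \<and> (x * e, x) \<in> syntactic_congruence A" for x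
    using syntactic_congruence_identity by (metis mult.commute)
  then show ?thesis
    unfolding monoid_congruence_def using semigroup_congruence_syntactic_congruence by blast
qed

theorem corollary5:
  shows "(\<exists>p :: ('a::ab_semigroup_mult \<times> 'a) set. monoid_congruence p \<and> p \<noteq> UNIV)
     \<longleftrightarrow> (\<exists>A :: 'a set. A \<noteq> {} \<and> A \<noteq> UNIV \<and> Sep A \<noteq> {})"
proof
  assume "\<exists>p :: ('a \<times> 'a) set. monoid_congruence p \<and> p \<noteq> UNIV"
  then show "\<exists>A :: 'a set. A \<noteq> {} \<and> A \<noteq> UNIV \<and> Sep A \<noteq> {}"
    using nonuniversal_monoid_congruence_imp_ex_Sep by blast
next
  assume "\<exists>A :: 'a set. A \<noteq> {} \<and> A \<noteq> UNIV \<and> Sep A \<noteq> {}"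
  then show "\<exists>p :: ('a \<times> 'a) set. monoid_congruence p \<and> p \<noteq> UNIV"
    using monoid_congruence_syntactic_congruence syntactic_congruence_neq_UNIV by blast
qed

end
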